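(* Let $d>0$, $a\geq 7$ be integers with $\gcd(a,d)=1$, $\Gamma_4=\langle a,2a+d,3a+3d,4a+6d\rangle$ and $M=\Gamma_4\setminus\{0\}$. For $0\leq t\leq a-1$ let $(\mu_t,\nu_t,\xi_t)$ be as in the context, and for $s\geq 0$ let $\omega_{s,t}$ be as in the context. Then for all $0\leq t\leq a-1$ and $0\leq s\leq \lfloor a/6\rfloor+2$: $$\omega_{s,t}=\begin{cases}(4\mu_t+3\nu_t+2\xi_t)a+td & \text{if } 0\leq s\leq \mu_t+\nu_t+\xi_t,\\ (3\mu_t+2\nu_t+\xi_t+s)a+td & \text{if } \mu_t+\nu_t+\xi_t< s\leq \lfloor a/6\rfloor+2,\end{cases}$$ so the Apéry table has $\lfloor a/6\rfloor+3$ rows (indexed $s=0,\dots,\lfloor a/6\rfloor+2$) and $a$ columns. Moreover, the reduction number of the maximal ideal $\mathfrak{m}$ of $k[[t^a,t^{2a+d},t^{3a+3d},t^{4a+6d}]]$ with respect to $(t^a)$, i.e. the least $r$ such that $(n+1)M=a+nM$ for all $n\geq r$, equals $\lfloor a/6\rfloor+2$.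
   Context: For $1\leq i\leq a-1$ write $i=6\mu_i+q_i$ with $0\leq q_i<6$, set $(\nu_i,\xi_i)=(1,q_i-3)$ if $q_i\geq3$ and $(\nu_i,\xi_i)=(0,q_i)$ if $q_i<3$; set $(\mu_0,\nu_0,\xi_0)=(0,0,0)$. For $n\geq1$, $nM=M+\cdots+M$ ($n$ copies). The Apéry table entries are: $\omega_{0,t}=(4\mu_t+3\nu_t+2\xi_t)a+td$ (the element of $\mathrm{Ap}(\Gamma_4,a)$ congruent to $td$ mod $a$, with $\omega_{0,0}=0$), and for $s\geq1$, $\omega_{s,t}$ is the smallest element of $sM$ congruent to $td$ modulo $a$ (equivalently $\mathrm{Ap}(sM)=sM\setminus(a+sM)=\{\omega_{s,0},\dots,\omega_{s,a-1}\}$). *)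

theory Defs
  imports Main
begin

definition Gamma4 :: "nat \<Rightarrow> nat \<Rightarrow> nat set" where
  "Gamma4 a d = {x. \<exists>c1 c2 c3 c4::nat.
      x = c1 * a + c2 * (2*a + d) + c3 * (3*a + 3*d) + c4 * (4*a + 6*d)}"

definition Mset :: "nat \<Rightarrow> nat \<Rightarrow> nat set" where
  "Mset a d = Gamma4 a d - {0}"

fun sumsetM :: "nat \<Rightarrow> nat \<Rightarrow> nat \<Rightarrow> nat set" where
  "sumsetM a d 0 = {0}"
| "sumsetM a d (Suc n) = {x + y | x y. x \<in> Mset a d \<and> y \<in> sumsetM a d n}"

definition mu :: "nat \<Rightarrow> nat" where "mu i = i div 6"
definition nu :: "nat \<Rightarrow> nat" where "nu i = (if i mod 6 \<ge> 3 then 1 else 0)"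
definition xi :: "nat \<Rightarrow> nat" where
  "xi i = (if i mod 6 \<ge> 3 then i mod 6 - 3 else i mod 6)"

definition omega :: "nat \<Rightarrow> nat \<Rightarrow> nat \<Rightarrow> nat \<Rightarrow> nat" where
  "omega a d s t = (if s = 0
     then (LEAST x. x \<in> Gamma4 a d \<and> x mod a = (t*d) mod a)
     else (LEAST x. x \<in> sumsetM a d s \<and> x mod a = (t*d) mod a))"

definition reduction_number :: "nat \<Rightarrow> nat \<Rightarrow> nat" where
  "reduction_number a d = (LEAST r. \<forall>n\<ge>r.
      sumsetM a d (Suc n) = (\<lambda>x. a + x) ` sumsetM a d n)"

end

theory Submission
  imports Defs "HOL-Number_Theory.Cong"
begin

text \<open>A factorization c1 a + c2 (2a+d) + c3 (3a+3d) + c4 (4a+6d) equals A a + T d with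
  A = c1 + 2c2 + 3c3 + 4c4 and T = c2 + 3c3 + 6c4, and its length is A - (c2 + 2c3 + 3c4).
  For fixed T the greedy choice (c2, c3, c4) = (\<xi>, \<nu>, \<mu>) minimises 2c2 + 3c3 + 4c4 and
  c2 + 2c3 + 3c4 simultaneously, so sM consists exactly of the A a + T d with
  A \<ge> max (weight T) (s + excess T). As gcd(a,d) = 1, an element of the residue class of t d
  has T = t or T \<ge> t + a, and a shift of T by a \<ge> 7 raises both weight and excess; hence
  \<omega>(s,t) = max (weight t) (s + excess t) a + t d. For n \<ge> \<lfloor>a/6\<rfloor> + 2 the exchange
  (A, T) \<mapsto> (A + d - 1, T - a) splits off a summand a from every element of (n+1)M with
  A = weight T, whereas for t = 6\<lfloor>a/6\<rfloor> - 1 the least elements of (n+1)M and nM in the class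
  of t d coincide when n = \<lfloor>a/6\<rfloor> + 1.\<close>

definition weight :: "nat \<Rightarrow> nat" where
  "weight T = 4 * mu T + 3 * nu T + 2 * xi T"

definition excess :: "nat \<Rightarrow> nat" where
  "excess T = 3 * mu T + 2 * nu T + xi T"

lemma weight_eq_excess_plus_length: "weight T = excess T + (mu T + nu T + xi T)"
  unfolding weight_def excess_def by simp

lemma greedy_decomposition: "T = xi T + 3 * nu T + 6 * mu T" "nu T \<le> 1" "xi T \<le> 2"
  unfolding mu_def nu_def xi_def by presburger+

lemma greedy_unique:
  assumes "c2 \<le> 2" "c3 \<le> 1"
  shows "xi (c2 + 3*c3 + 6*c4) = c2 \<and> nu (c2 + 3*c3 + 6*c4) = c3 \<and> mu (c2 + 3*c3 + 6*c4) = c4"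
proof -
  have "(c2 + 3*c3 + 6*c4) div 6 = c4" "(c2 + 3*c3 + 6*c4) mod 6 = c2 + 3*c3"
    using assms by simp_all
  then show ?thesis
    using assms unfolding mu_def nu_def xi_def by (cases c3) auto
qed

text \<open>Exchange argument: trading three 1s for a 3, or two 3s for a 6, does not increase
  the cost, and a representation admitting neither trade is the greedy one.\<close>
lemma greedy_cost_le:
  assumes "q \<le> 3 * p" "r \<le> 2 * q" "T = c2 + 3*c3 + 6*c4"
  shows "p * xi T + q * nu T + r * mu T \<le> p * c2 + q * c3 + r * c4"
  using assms(3)
proof (induction "c2 + c3" arbitrary: c2 c3 c4 rule: less_induct)
  case less
  consider "3 \<le> c2" | "2 \<le> c3" | "c2 \<le> 2" "c3 \<le> 1" by linarith
  then show ?case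
  proof cases
    case 1
    then obtain k where k: "c2 = k + 3" by (metis add.commute le_Suc_ex numeral_3_eq_3)
    have "p * xi T + q * nu T + r * mu T \<le> p * k + q * (c3 + 1) + r * c4"
      using less(1)[of k "c3 + 1" c4] less(2) k by simp
    also have "\<dots> \<le> p * c2 + q * c3 + r * c4"
      using k assms(1) by (simp add: distrib_left)
    finally show ?thesis .
  next
    case 2
    then obtain k where k: "c3 = k + 2" by (metis add.commute le_Suc_ex numeral_2_eq_2)
    have "p * xi T + q * nu T + r * mu T \<le> p * c2 + q * k + r * (c4 + 1)"
      using less(1)[of c2 k "c4 + 1"] less(2) k by simp
    also have "\<dots> \<le> p * c2 + q * c3 + r * c4"
      using k assms(2) by (simp add: distrib_left)
    finally show ?thesis .
  next
    case 3
    then show ?thesis using greedy_unique less(2) by simp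
  qed
qed

lemma weight_le_cost: "weight (c2 + 3*c3 + 6*c4) \<le> 2*c2 + 3*c3 + 4*c4"
  using greedy_cost_le[of 3 2 4 _ c2 c3 c4] unfolding weight_def by simp

lemma excess_le_cost: "excess (c2 + 3*c3 + 6*c4) \<le> c2 + 2*c3 + 3*c4"
  using greedy_cost_le[of 2 1 3 _ c2 c3 c4] unfolding excess_def by simp

lemma weight_less_of_gap: "U + 7 \<le> T \<Longrightarrow> weight U < weight T"
  using greedy_decomposition[of U] greedy_decomposition[of T] unfolding weight_def by linarith

lemma excess_le_of_gap: "U + 3 \<le> T \<Longrightarrow> excess U \<le> excess T"
  using greedy_decomposition[of U] greedy_decomposition[of T] unfolding excess_def by linarith

lemma le_of_greedy_length_ge: "a div 6 + 3 \<le> mu T + nu T + xi T \<Longrightarrow> a \<le> T"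
  using greedy_decomposition[of T] by linarith

lemma greedy_length_sharp:
  assumes "7 \<le> a" "t = 6 * (a div 6) - 1"
  shows "t < a" "mu t + nu t + xi t = a div 6 + 2"
proof -
  show "t < a"
    using assms div_times_less_eq_dividend[of a 6] by linarith
  obtain p where p: "a div 6 = Suc p" using assms(1) not0_implies_Suc by fastforce
  then have "t = 2 + 3 * 1 + 6 * p" using assms(2) by simp
  then show "mu t + nu t + xi t = a div 6 + 2"
    using greedy_unique[of 2 1 p] p by simp
qed

definition Gamma4_len_ge :: "nat \<Rightarrow> nat \<Rightarrow> nat \<Rightarrow> nat set" where
  "Gamma4_len_ge a d N = {c1 * a + c2 * (2*a + d) + c3 * (3*a + 3*d) + c4 * (4*a + 6*d)
      | c1 c2 c3 c4. N \<le> c1 + c2 + c3 + c4}"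

lemma Gamma4_len_geI:
  "N \<le> c1 + c2 + c3 + c4 \<Longrightarrow>
     c1 * a + c2 * (2*a + d) + c3 * (3*a + 3*d) + c4 * (4*a + 6*d) \<in> Gamma4_len_ge a d N"
  unfolding Gamma4_len_ge_def by blast

lemma factorization_coordinates:
  "c1 * a + c2 * (2*a + d) + c3 * (3*a + 3*d) + c4 * (4*a + 6*d)
     = (c1 + 2*c2 + 3*c3 + 4*c4) * a + (c2 + 3*c3 + 6*c4) * (d::nat)"
  by (simp add: algebra_simps)

lemma Gamma4_len_ge_iff:
  "x \<in> Gamma4_len_ge a d N \<longleftrightarrow>
     (\<exists>A T. x = A * a + T * d \<and> weight T \<le> A \<and> N + excess T \<le> A)"
proof
  assume "x \<in> Gamma4_len_ge a d N"
  then obtain c1 c2 c3 c4 where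
    x: "x = c1 * a + c2 * (2*a + d) + c3 * (3*a + 3*d) + c4 * (4*a + 6*d)"
    and N: "N \<le> c1 + c2 + c3 + c4"
    unfolding Gamma4_len_ge_def by blast
  show "\<exists>A T. x = A * a + T * d \<and> weight T \<le> A \<and> N + excess T \<le> A"
    using x N weight_le_cost[of c2 c3 c4] excess_le_cost[of c2 c3 c4]
    by (intro exI[of _ "c1 + 2*c2 + 3*c3 + 4*c4"] exI[of _ "c2 + 3*c3 + 6*c4"])
       (simp add: factorization_coordinates)
next
  assume "\<exists>A T. x = A * a + T * d \<and> weight T \<le> A \<and> N + excess T \<le> A"
  then obtain A T where x: "x = A * a + T * d" and w: "weight T \<le> A" and e: "N + excess T \<le> A"
    by blast
  have "A = (A - weight T) + 2 * xi T + 3 * nu T + 4 * mu T"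
    using w unfolding weight_def by linarith
  then have "x = (A - weight T) * a + xi T * (2*a + d) + nu T * (3*a + 3*d) + mu T * (4*a + 6*d)"
    using x greedy_decomposition(1)[of T] unfolding factorization_coordinates by simp
  moreover have "N \<le> (A - weight T) + xi T + nu T + mu T"
    using w e weight_eq_excess_plus_length[of T] by linarith
  ultimately show "x \<in> Gamma4_len_ge a d N"
    by (simp add: Gamma4_len_geI)
qed

lemma Gamma4_eq_len_ge_0: "Gamma4 a d = Gamma4_len_ge a d 0"
  unfolding Gamma4_def Gamma4_len_ge_def by simp

lemma Mset_eq_len_ge_1:
  assumes "0 < a"
  shows "Mset a d = Gamma4_len_ge a d 1"
  unfolding Mset_def Gamma4_def Gamma4_len_ge_def using assms by fastforce

lemma Gamma4_len_ge_add:
  assumes "x \<in> Gamma4_len_ge a d m" "y \<in> Gamma4_len_ge a d n"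
  shows "x + y \<in> Gamma4_len_ge a d (m + n)"
proof -
  obtain c1 c2 c3 c4 where
    "x = c1 * a + c2 * (2*a + d) + c3 * (3*a + 3*d) + c4 * (4*a + 6*d)" "m \<le> c1 + c2 + c3 + c4"
    using assms(1) unfolding Gamma4_len_ge_def by blast
  moreover obtain e1 e2 e3 e4 where
    "y = e1 * a + e2 * (2*a + d) + e3 * (3*a + 3*d) + e4 * (4*a + 6*d)" "n \<le> e1 + e2 + e3 + e4"
    using assms(2) unfolding Gamma4_len_ge_def by blast
  ultimately show ?thesis
    using Gamma4_len_geI[of "m + n" "c1 + e1" "c2 + e2" "c3 + e3" "c4 + e4" a d]
    by (simp add: algebra_simps)
qed

lemma Gamma4_len_ge_Suc_split:
  assumes "z \<in> Gamma4_len_ge a d (Suc n)"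
  shows "\<exists>x y. z = x + y \<and> x \<in> Gamma4_len_ge a d 1 \<and> y \<in> Gamma4_len_ge a d n"
proof -
  obtain c1 c2 c3 c4 where
    z: "z = c1 * a + c2 * (2*a + d) + c3 * (3*a + 3*d) + c4 * (4*a + 6*d)"
    and len: "Suc n \<le> c1 + c2 + c3 + c4"
    using assms unfolding Gamma4_len_ge_def by blast
  consider k where "c1 = Suc k" | k where "c2 = Suc k" | k where "c3 = Suc k" | k where "c4 = Suc k"
    using len by (metis add_is_0 not0_implies_Suc not_less_eq_eq zero_le)
  then show ?thesis
  proof cases
    case (1 k)
    have "z = a + (k * a + c2 * (2*a + d) + c3 * (3*a + 3*d) + c4 * (4*a + 6*d))"
      using z 1 by simp
    then show ?thesis
      using len 1 Gamma4_len_geI[of 1 1 0 0 0 a d] Gamma4_len_geI[of n k c2 c3 c4 a d] by fastforce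
  next
    case (2 k)
    have "z = (2*a + d) + (c1 * a + k * (2*a + d) + c3 * (3*a + 3*d) + c4 * (4*a + 6*d))"
      using z 2 by simp
    then show ?thesis
      using len 2 Gamma4_len_geI[of 1 0 1 0 0 a d] Gamma4_len_geI[of n c1 k c3 c4 a d] by fastforce
  next
    case (3 k)
    have "z = (3*a + 3*d) + (c1 * a + c2 * (2*a + d) + k * (3*a + 3*d) + c4 * (4*a + 6*d))"
      using z 3 by simp
    then show ?thesis
      using len 3 Gamma4_len_geI[of 1 0 0 1 0 a d] Gamma4_len_geI[of n c1 c2 k c4 a d] by fastforce
  next
    case (4 k)
    have "z = (4*a + 6*d) + (c1 * a + c2 * (2*a + d) + c3 * (3*a + 3*d) + k * (4*a + 6*d))"
      using z 4 by simp
    then show ?thesis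
      using len 4 Gamma4_len_geI[of 1 0 0 0 1 a d] Gamma4_len_geI[of n c1 c2 c3 k a d] by fastforce
  qed
qed

lemma sumsetM_eq_len_ge:
  assumes "0 < a" "0 < n"
  shows "sumsetM a d n = Gamma4_len_ge a d n"
  using assms(2)
proof (induction n rule: nat_induct_non_zero)
  case 1
  show ?case using Mset_eq_len_ge_1[OF assms(1)] by auto
next
  case (Suc n)
  show ?case
    using Gamma4_len_ge_add[of _ a d 1 _ n] Gamma4_len_ge_Suc_split[of _ a d n]
    unfolding sumsetM.simps(2) Suc.IH Mset_eq_len_ge_1[OF assms(1)] by fastforce
qed

lemma omega_eq_Least_len_ge:
  assumes "0 < a"
  shows "omega a d s t = (LEAST x. x \<in> Gamma4_len_ge a d s \<and> x mod a = t * d mod a)"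
  using sumsetM_eq_len_ge[OF assms, of s d] by (simp add: omega_def Gamma4_eq_len_ge_0)

lemma coprime_mult_mod_eq_cases:
  fixes a d t T :: nat
  assumes "coprime a d" "t < a" "T * d mod a = t * d mod a"
  shows "T = t \<or> t + a \<le> T"
proof -
  have "[T = t] (mod a)"
    using assms(1,3) cong_mult_rcancel_nat[of d a T t] by (simp add: cong_def coprime_commute)
  then have "T = a * (T div a) + t"
    using assms(2) mult_div_mod_eq[of a T] by (simp add: cong_def)
  then show ?thesis by (cases "T div a") simp_all
qed

lemma apery_entry_mem: "max (weight t) (s + excess t) * a + t * d \<in> Gamma4_len_ge a d s"
  unfolding Gamma4_len_ge_iff by (intro exI[of _ "max (weight t) (s + excess t)"] exI[of _ t]) simp

lemma apery_entry_le:
  assumes "7 \<le> a" "coprime a d" "t < a"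
    and "x \<in> Gamma4_len_ge a d s" "x mod a = t * d mod a"
  shows "max (weight t) (s + excess t) * a + t * d \<le> x"
proof -
  obtain A T where x: "x = A * a + T * d" and w: "weight T \<le> A" and e: "s + excess T \<le> A"
    using assms(4) Gamma4_len_ge_iff by blast
  have "T = t \<or> t + a \<le> T"
    using coprime_mult_mod_eq_cases[OF assms(2,3)] x assms(5) by simp
  then have "t \<le> T" "weight t \<le> weight T" "excess t \<le> excess T"
    using assms(1) weight_less_of_gap[of t T] excess_le_of_gap[of t T] by auto
  then have "max (weight t) (s + excess t) * a \<le> A * a" "t * d \<le> T * d"
    using w e by simp_all
  then show ?thesis using x by linarith
qed

lemma omega_eq:
  assumes "7 \<le> a" "coprime a d" "t < a"
  shows "omega a d s t = max (weight t) (s + excess t) * a + t * d"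
proof -
  have "0 < a" using assms(1) by simp
  then show ?thesis
    unfolding omega_eq_Least_len_ge[OF \<open>0 < a\<close>]
    by (intro Least_equality) (auto simp: apery_entry_mem apery_entry_le[OF assms])
qed

lemma shift_len_ge_subset: "(+) a ` Gamma4_len_ge a d n \<subseteq> Gamma4_len_ge a d (Suc n)"
proof
  fix x assume "x \<in> (+) a ` Gamma4_len_ge a d n"
  then obtain y where "x = a + y" "y \<in> Gamma4_len_ge a d n" by blast
  then obtain A T where "x = a + (A * a + T * d)" "weight T \<le> A" "n + excess T \<le> A"
    unfolding Gamma4_len_ge_iff by blast
  then show "x \<in> Gamma4_len_ge a d (Suc n)"
    unfolding Gamma4_len_ge_iff by (intro exI[of _ "Suc A"] exI[of _ T]) simp
qed

lemma len_ge_Suc_subset_shift: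
  assumes "7 \<le> a" "0 < d" "a div 6 + 2 \<le> n"
  shows "Gamma4_len_ge a d (Suc n) \<subseteq> (+) a ` Gamma4_len_ge a d n"
proof
  fix x assume "x \<in> Gamma4_len_ge a d (Suc n)"
  then obtain A T where x: "x = A * a + T * d" and w: "weight T \<le> A" and e: "Suc n + excess T \<le> A"
    unfolding Gamma4_len_ge_iff by blast
  consider "weight T < A" | "A = weight T" using w by linarith
  then have "\<exists>B U. x = a + (B * a + U * d) \<and> weight U \<le> B \<and> n + excess U \<le> B"
  proof cases
    case 1
    have "x = a + ((A - 1) * a + T * d)" using x 1 by (cases A) simp_all
    moreover have "weight T \<le> A - 1" "n + excess T \<le> A - 1" using 1 e by simp_all
    ultimately show ?thesis by blast
  next
    case 2
    then have "a div 6 + 3 \<le> mu T + nu T + xi T"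
      using e assms(3) weight_eq_excess_plus_length[of T] by linarith
    then have "a \<le> T" by (rule le_of_greedy_length_ge)
    then obtain U where U: "T = U + a" by (metis le_add_diff_inverse2)
    have "weight U < weight T" "excess U \<le> excess T"
      using U assms(1) weight_less_of_gap[of U T] excess_le_of_gap[of U T] by simp_all
    moreover have "x = a + ((A + d - 1) * a + U * d)"
      using x U assms(2) by (cases d) (simp_all add: algebra_simps)
    moreover have "weight U \<le> A + d - 1" "n + excess U \<le> A + d - 1"
      using calculation 2 e by simp_all
    ultimately show ?thesis by blast
  qed
  then obtain y where "x = a + y" "y \<in> Gamma4_len_ge a d n"
    unfolding Gamma4_len_ge_iff by blast
  then show "x \<in> (+) a ` Gamma4_len_ge a d n" by blast
qed

lemma sumsetM_Suc_eq_shift: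
  assumes "7 \<le> a" "0 < d" "a div 6 + 2 \<le> n"
  shows "sumsetM a d (Suc n) = (+) a ` sumsetM a d n"
proof -
  have "0 < a" "0 < n" using assms(1,3) by simp_all
  then have "sumsetM a d (Suc n) = Gamma4_len_ge a d (Suc n)" "sumsetM a d n = Gamma4_len_ge a d n"
    using sumsetM_eq_len_ge by blast+
  then show ?thesis
    using shift_len_ge_subset[of a d n] len_ge_Suc_subset_shift[OF assms] by simp
qed

lemma sumsetM_Suc_neq_shift:
  assumes "7 \<le> a" "coprime a d"
  shows "sumsetM a d (Suc (a div 6 + 1)) \<noteq> (+) a ` sumsetM a d (a div 6 + 1)"
proof
  assume shift: "sumsetM a d (Suc (a div 6 + 1)) = (+) a ` sumsetM a d (a div 6 + 1)"
  define n where "n = a div 6 + 1"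
  define t where "t = 6 * (a div 6) - 1"
  have t: "t < a" "mu t + nu t + xi t = Suc n"
    using greedy_length_sharp[OF assms(1) t_def] unfolding n_def by simp_all
  then have max_eq: "max (weight t) (k + excess t) = weight t" if "k \<le> Suc n" for k
    using that weight_eq_excess_plus_length[of t] by simp
  have "0 < a" using assms(1) by simp
  have shift_len_ge: "Gamma4_len_ge a d (Suc n) = (+) a ` Gamma4_len_ge a d n"
    using shift sumsetM_eq_len_ge[OF \<open>0 < a\<close>, of "Suc n" d]
      sumsetM_eq_len_ge[OF \<open>0 < a\<close>, of n d]
    unfolding n_def by simp
  have "weight t * a + t * d \<in> Gamma4_len_ge a d (Suc n)"
    using apery_entry_mem[of t "Suc n" a d] max_eq[of "Suc n"] by simp
  then obtain y where y: "weight t * a + t * d = a + y" "y \<in> Gamma4_len_ge a d n"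
    unfolding shift_len_ge by blast
  then have "y mod a = t * d mod a" by (metis mod_add_self1 mod_mult_self3)
  then have "max (weight t) (n + excess t) * a + t * d \<le> y"
    using apery_entry_le[OF assms t(1) y(2)] by simp
  then show False using y(1) max_eq[of n] \<open>0 < a\<close> by simp
qed

lemma reduction_number_eq:
  assumes "7 \<le> a" "0 < d" "coprime a d"
  shows "reduction_number a d = a div 6 + 2"
  unfolding reduction_number_def
proof (rule Least_equality)
  show "\<forall>n \<ge> a div 6 + 2. sumsetM a d (Suc n) = (+) a ` sumsetM a d n"
    using sumsetM_Suc_eq_shift[OF assms(1,2)] by blast
next
  fix r assume shift: "\<forall>n \<ge> r. sumsetM a d (Suc n) = (+) a ` sumsetM a d n"
  show "a div 6 + 2 \<le> r"
  proof (rule ccontr)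
    assume "\<not> a div 6 + 2 \<le> r"
    then have "r \<le> a div 6 + 1" by simp
    then show False using shift sumsetM_Suc_neq_shift[OF assms(1,3)] by blast
  qed
qed

theorem corollary6p4:
  fixes a d :: nat
  assumes "d > 0" and "a \<ge> 7" and "coprime a d"
  shows "(\<forall>t<a. \<forall>s\<le>a div 6 + 2.
            omega a d s t =
              (if s \<le> mu t + nu t + xi t
               then (4 * mu t + 3 * nu t + 2 * xi t) * a + t * d
               else (3 * mu t + 2 * nu t + xi t + s) * a + t * d))
         \<and> reduction_number a d = a div 6 + 2"
  using omega_eq[OF assms(2,3)] reduction_number_eq[OF assms(2,1,3)]
  by (simp add: weight_def excess_def max_def)

end
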